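(* Let $n > m \geq 2$ be integers, let $X$ be a random variable taking values in $\mathcal{X}=\{x_1,\ldots,x_n\}$ with $P\{X=x_i\}=p_i$, where $\mathbf{p}=(p_1,\ldots,p_n)$ satisfies $p_1\geq p_2\geq\cdots\geq p_n\geq 0$ and $\sum_i p_i=1$. Then $$\max_{f\in\mathcal{F}_m} H(f(X)) \in \big[\,H(R_m(\mathbf{p}))-\alpha,\; H(R_m(\mathbf{p}))\,\big], \qquad \text{where } \alpha = 1-\frac{1+\ln(\ln 2)}{\ln 2}<0.08608,$$ and $$\min_{f\in\mathcal{F}_m} H(f(X)) = H(Q_m(\mathbf{p})).$$
   Context: $H$ denotes Shannon entropy in bits: for a probability vector $\mathbf{a}=(a_1,\ldots,a_t)$, $H(\mathbf{a})=-\sum_i a_i\log_2 a_i$ with $0\log 0=0$; $\ln$ is the natural logarithm. $\mathcal{Y}_m=\{y_1,\ldots,y_m\}$ is a set of $m$ elements and $\mathcal{F}_m$ is the set of all surjective functions $f:\mathcal{X}\to\mathcal{Y}_m$. Definition of $R_m(\mathbf{p})=(r_1,\ldots,r_m)$ for $\mathbf{p}$ sorted nonincreasingly: if $p_1<1/m$, then $R_m(\mathbf{p})=(1/m,\ldots,1/m)$. If $p_1\geq 1/m$, let $i^*$ be the maximum index $i\in\{1,\ldots,m-1\}$ such that $p_i\geq \frac{\sum_{j=i+1}^n p_j}{m-i}$. Then set $r_i=p_i$ for $i=1,\ldots,i^*$ and $r_i=\frac{\sum_{j=i^*+1}^n p_j}{m-i^*}$ for $i=i^*+1,\ldots,m$.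 Definition of $Q_m(\mathbf{p})=(q_1,\ldots,q_m)$: $q_1=\sum_{k=1}^{n-m+1}p_k$ and $q_i=p_{n-m+i}$ for $i=2,\ldots,m$. *)

theory Defs
  imports "HOL-Library.FuncSet" Complex_Main
begin

definition entropy :: "nat set \<Rightarrow> (nat \<Rightarrow> real) \<Rightarrow> real" where
  "entropy I a = - (\<Sum>i\<in>I. if a i = 0 then 0 else a i * log 2 (a i))"

text \<open>X takes value x_i (i = 1..n) with probability p i; Y_m = {y_1..y_m} is indexed by {1..m}.
  A function f : X \<rightarrow> Y_m is represented by its index map {1..n} \<rightarrow> {1..m}.\<close>
definition surj_funs :: "nat \<Rightarrow> nat \<Rightarrow> (nat \<Rightarrow> nat) set" where
  "surj_funs n m = {f. f \<in> {1..n} \<rightarrow>\<^sub>E {1..m} \<and> f ` {1..n} = {1..m}}"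

definition img_dist :: "nat \<Rightarrow> (nat \<Rightarrow> real) \<Rightarrow> (nat \<Rightarrow> nat) \<Rightarrow> nat \<Rightarrow> real" where
  "img_dist n p f j = (\<Sum>i\<in>{i\<in>{1..n}. f i = j}. p i)"

definition istar :: "nat \<Rightarrow> nat \<Rightarrow> (nat \<Rightarrow> real) \<Rightarrow> nat" where
  "istar n m p = Max {i\<in>{1..m-1}. p i \<ge> (\<Sum>j=i+1..n. p j) / real (m - i)}"

definition R_vec :: "nat \<Rightarrow> nat \<Rightarrow> (nat \<Rightarrow> real) \<Rightarrow> nat \<Rightarrow> real" where
  "R_vec n m p i =
     (if p 1 < 1 / real m then 1 / real m
      else if i \<le> istar n m p then p i
      else (\<Sum>j=istar n m p+1..n. p j) / real (m - istar n m p))"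

definition Q_vec :: "nat \<Rightarrow> nat \<Rightarrow> (nat \<Rightarrow> real) \<Rightarrow> nat \<Rightarrow> real" where
  "Q_vec n m p i = (if i = 1 then (\<Sum>k=1..n-m+1. p k) else p (n - m + i))"

end

theory Submission
  imports Defs "HOL-Analysis.Harmonic_Numbers"
begin

text \<open>
  Write \<open>eta x = - x log x\<close>, so that entropies are sums of \<open>eta\<close>.

  Minimum: \<open>eta\<close> is concave, so moving mass from any bin into the heaviest one lowers the
  entropy. For a surjection \<open>f\<close> this reduces \<open>f(X)\<close> to one heavy bin together with \<open>m - 1\<close>
  single atoms, one from every other bin; exchanging these atoms for the \<open>m - 1\<close> smallest ones
  lowers the entropy further and yields exactly \<open>Q_m(p)\<close>, which is attained.

  Maximum, upper bound: extend \<open>R_m(p)\<close> to a nonincreasing vector \<open>r\<close> on all \<open>n\<close> indices.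
  Give bin \<open>j\<close> the value of \<open>r\<close> at the smallest index in the bin; these \<open>m\<close> values are at most
  \<open>1\<close> in total, so Gibbs' inequality bounds \<open>H(f(X))\<close> by a cross entropy which, by monotonicity
  of \<open>r\<close>, is at most \<open>- \<Sum> p_i log r_i = H(R_m(p))\<close>.

  Maximum, lower bound: keep the first \<open>i*\<close> atoms as singletons and distribute the others over
  the remaining \<open>m - i*\<close> bins minimising the sum of squared bin masses. As no single atom of the
  tail outweighs the average bin, the heaviest bin holds an atom of at most half its mass, and
  minimality makes all bin masses agree within a factor \<open>2\<close>. For such masses the chord of
  \<open>x log x\<close> on \<open>[\<mu>, 2\<mu>]\<close> shows that the entropy falls short of the uniform split by at most
  \<open>\<alpha>\<close> times the total mass.
\<close>

definition eta :: "real \<Rightarrow> real" where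
  "eta x = - x * log 2 x"

definition eta_deriv :: "real \<Rightarrow> real" where
  "eta_deriv x = - (log 2 x + 1 / ln 2)"

lemma entropy_eq_sum_eta: "entropy I a = (\<Sum>i\<in>I. eta (a i))"
  unfolding entropy_def eta_def sum_negf[symmetric] by (intro arg_cong[where f = uminus] sum.cong) auto

lemma eta_0 [simp]: "eta 0 = 0"
  by (simp add: eta_def)

lemma eta_le_tangent:
  assumes "0 < z" "0 \<le> w"
  shows "eta w \<le> eta z + (w - z) * eta_deriv z"
proof (cases "w = 0")
  case True
  then show ?thesis using assms by (simp add: eta_def eta_deriv_def log_def field_simps)
next
  case False
  with assms have w: "w > 0" by simp
  have "ln (z / w) \<le> z / w - 1" using w assms by (intro ln_le_minus_one) simp
  then have "w * (ln z - ln w) \<le> z - w"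
    using w assms by (simp add: ln_div field_simps)
  moreover have "(eta z + (w - z) * eta_deriv z - eta w) * ln 2 = z - w - w * (ln z - ln w)"
    using w assms by (simp add: eta_def eta_deriv_def log_def field_simps)
  ultimately have "0 \<le> (eta z + (w - z) * eta_deriv z - eta w) * ln 2" by simp
  then show ?thesis by (simp add: zero_le_mult_iff)
qed

lemma eta_le_cross_entropy:
  assumes "0 \<le> a" "0 \<le> r" "a > 0 \<Longrightarrow> r > 0"
  shows "eta a \<le> - a * log 2 r + (r - a) / ln 2"
proof (cases "r = 0")
  case True
  with assms have "a = 0" by force
  then show ?thesis using True by simp
next
  case False
  with assms have "eta a \<le> eta r + (a - r) * eta_deriv r" by (intro eta_le_tangent) auto
  also have "\<dots> = - a * log 2 r + (r - a) / ln 2" by (simp add: eta_def eta_deriv_def field_simps)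
  finally show ?thesis .
qed

lemma eta_diff_ge:
  assumes "0 \<le> u" "u \<le> v" "v \<le> z" "0 < z"
  shows "(v - u) * eta_deriv z \<le> eta v - eta u"
proof (cases "u = v")
  case False
  with assms have v: "0 < v" by simp
  have "(v - u) * eta_deriv z \<le> (v - u) * eta_deriv v"
    using assms v by (intro mult_left_mono) (auto simp: eta_deriv_def)
  also have "\<dots> \<le> eta v - eta u" using eta_le_tangent[OF v assms(1)] by (simp add: algebra_simps)
  finally show ?thesis .
qed simp

lemma eta_transfer_to_largest:
  fixes b c :: "'a \<Rightarrow> real"
  assumes "finite K" "0 < z" "\<And>j. j \<in> K \<Longrightarrow> 0 \<le> c j \<and> c j \<le> b j \<and> b j \<le> z"
  shows "eta (z + (\<Sum>j\<in>K. b j - c j)) + (\<Sum>j\<in>K. eta (c j)) \<le> eta z + (\<Sum>j\<in>K. eta (b j))"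
proof -
  have "(\<Sum>j\<in>K. b j - c j) * eta_deriv z = (\<Sum>j\<in>K. (b j - c j) * eta_deriv z)"
    by (simp add: sum_distrib_right)
  also have "\<dots> \<le> (\<Sum>j\<in>K. eta (b j) - eta (c j))"
    using assms by (intro sum_mono eta_diff_ge) auto
  finally have gain: "(\<Sum>j\<in>K. b j - c j) * eta_deriv z \<le> (\<Sum>j\<in>K. eta (b j)) - (\<Sum>j\<in>K. eta (c j))"
    by (simp add: sum_subtractf)
  have "0 \<le> z + (\<Sum>j\<in>K. b j - c j)"
    using assms by (intro add_nonneg_nonneg sum_nonneg) auto
  from eta_le_tangent[OF assms(2) this]
  have "eta (z + (\<Sum>j\<in>K. b j - c j)) \<le> eta z + (\<Sum>j\<in>K. b j - c j) * eta_deriv z"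
    by simp
  with gain show ?thesis by linarith
qed

lemma gibbs_inequality:
  fixes a r :: "'a \<Rightarrow> real"
  assumes "finite I" "(\<Sum>i\<in>I. a i) = 1" "(\<Sum>i\<in>I. r i) \<le> 1"
    and "\<And>i. i \<in> I \<Longrightarrow> 0 \<le> a i" "\<And>i. i \<in> I \<Longrightarrow> 0 \<le> r i"
    and "\<And>i. i \<in> I \<Longrightarrow> 0 < a i \<Longrightarrow> 0 < r i"
  shows "(\<Sum>i\<in>I. eta (a i)) \<le> (\<Sum>i\<in>I. - a i * log 2 (r i))"
proof -
  have "(\<Sum>i\<in>I. eta (a i)) \<le> (\<Sum>i\<in>I. - a i * log 2 (r i) + (r i - a i) / ln 2)"
    using assms by (intro sum_mono eta_le_cross_entropy) auto
  also have "\<dots> = (\<Sum>i\<in>I. - a i * log 2 (r i)) + ((\<Sum>i\<in>I. r i) - 1) / ln 2"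
    using assms(2) by (simp add: sum.distrib sum_subtractf sum_divide_distrib[symmetric] sum_negf)
  also have "\<dots> \<le> (\<Sum>i\<in>I. - a i * log 2 (r i))"
    using assms(3) by (simp add: divide_nonpos_pos)
  finally show ?thesis .
qed

lemma neg_mult_log_antimono:
  assumes "0 \<le> a" "0 < a \<Longrightarrow> 0 < r \<and> r \<le> \<rho>"
  shows "- a * log 2 \<rho> \<le> - a * log 2 r"
proof (cases "a = 0")
  case False
  with assms have "log 2 r \<le> log 2 \<rho>" by simp
  with assms show ?thesis by (simp add: mult_left_mono)
qed simp

definition entropy_gap :: real where
  "entropy_gap = 1 - (1 + ln (ln 2)) / ln 2"

text \<open>The left-hand side is maximal at \<open>s = 2 ln 2\<close>, where it equals the gap.\<close>

lemma two_minus_log_le_entropy_gap: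
  assumes "0 < s"
  shows "2 - 2 / s - log 2 s \<le> entropy_gap"
proof -
  define t where "t = s / (2 * ln 2)"
  have t: "t > 0" using assms by (simp add: t_def)
  have "ln (1 / t) \<le> 1 / t - 1" using t by (intro ln_le_minus_one) simp
  then have "0 \<le> (ln t + 1 / t - 1) / ln 2" using t by (simp add: ln_div)
  moreover have "entropy_gap - (2 - 2 / s - log 2 s) = (ln t + 1 / t - 1) / ln 2"
    using t by (simp add: entropy_gap_def log_def t_def ln_mult ln_div field_simps)
  ultimately show ?thesis by linarith
qed

lemma entropy_gap_nonneg: "0 \<le> entropy_gap"
  using two_minus_log_le_entropy_gap[of 1] by simp

lemma ln_2_bounds: "ln (2::real) \<in> {0.693147..0.693148}"
  using ln_approx_bounds[of 2 10] by (simp add: numeral_eq_Suc)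

lemma ln_inverse_0_693147_le: "ln (1 / (0.693147::real)) \<le> 0.366514"
  using ln_approx_bounds[of "1 / 0.693147" 6] by (simp add: numeral_eq_Suc)

lemma entropy_gap_less: "entropy_gap < 0.08608"
proof -
  have ln2: "ln (2::real) \<in> {0.693147..0.693148}" by (rule ln_2_bounds)
  then have "ln (0.693147::real) \<le> ln (ln 2)" by simp
  moreover have "ln (0.693147::real) = - ln (1 / 0.693147)" by (simp add: ln_div)
  ultimately have "- 0.366514 \<le> ln (ln (2::real))" using ln_inverse_0_693147_le by linarith
  with ln2 have "0.91392 * ln (2::real) < 1 + ln (ln 2)" by simp
  then have "0.91392 < (1 + ln (ln 2)) / ln (2::real)" by (simp add: pos_less_divide_eq)
  then show ?thesis by (simp add: entropy_gap_def)
qed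

lemma xlogx_le_chord:
  assumes "0 < \<mu>" "\<mu> \<le> y" "y \<le> 2 * \<mu>"
  shows "y * log 2 y \<le> y * log 2 \<mu> + 2 * (y - \<mu>)"
proof -
  define s where "s = y / \<mu>"
  have s: "1 \<le> s" "s \<le> 2" using assms by (auto simp: s_def field_simps)
  define t where "t = 2 - 2 / s"
  have t: "0 \<le> t" "t \<le> 1" using s by (auto simp: t_def field_simps)
  have "(1 - t) * ln 1 + t * ln (1 / 2) \<le> ln ((1 - t) *\<^sub>R 1 + t *\<^sub>R (1 / 2 :: real))"
    using t by (intro concave_onD[OF ln_concave]) auto
  also have "(1 - t) *\<^sub>R 1 + t *\<^sub>R (1 / 2 :: real) = 1 / s"
    using s by (simp add: t_def field_simps)
  finally have "ln s \<le> t * ln 2" using s by (simp add: ln_div)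
  then have "s * ln s \<le> 2 * (s - 1) * ln 2"
    using s mult_left_mono[of "ln s" "t * ln 2" s] by (simp add: t_def field_simps)
  then have "\<mu> * (s * ln s) / ln 2 \<le> \<mu> * (2 * (s - 1) * ln 2) / ln 2"
    using assms by (intro divide_right_mono mult_left_mono) auto
  moreover have "y * log 2 y - y * log 2 \<mu> = \<mu> * (s * ln s) / ln 2"
    using assms s by (simp add: s_def log_def ln_div field_simps)
  moreover have "\<mu> * (2 * (s - 1) * ln 2) / ln 2 = 2 * (y - \<mu>)"
    using assms by (simp add: s_def field_simps)
  ultimately show ?thesis by simp
qed

lemma sum_eta_balanced_ge:
  fixes y :: "'a \<Rightarrow> real"
  assumes "finite B" "B \<noteq> {}" "\<And>j. j \<in> B \<Longrightarrow> 0 \<le> y j"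
    and balanced: "\<And>j j'. j \<in> B \<Longrightarrow> j' \<in> B \<Longrightarrow> y j \<le> 2 * y j'"
  shows "real (card B) * eta ((\<Sum>j\<in>B. y j) / real (card B)) - entropy_gap * (\<Sum>j\<in>B. y j)
           \<le> (\<Sum>j\<in>B. eta (y j))"
proof -
  define T where "T = (\<Sum>j\<in>B. y j)"
  define k where "k = real (card B)"
  have k: "k > 0" using assms by (simp add: k_def card_gt_0_iff)
  show ?thesis
  proof (cases "T = 0")
    case True
    then have "\<forall>j\<in>B. y j = 0" using assms by (simp add: T_def sum_nonneg_eq_0_iff)
    then show ?thesis using True by (simp add: T_def)
  next
    case False
    then have T: "T > 0" using assms sum_nonneg[of B y] by (simp add: T_def)
    define \<mu> where "\<mu> = Min (y ` B)"
    have "\<mu> \<in> y ` B" unfolding \<mu>_def using assms by (intro Min_in) auto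
    then obtain j0 where j0: "j0 \<in> B" "y j0 = \<mu>" by auto
    have \<mu>_le: "\<mu> \<le> y j" if "j \<in> B" for j
      using that assms by (simp add: \<mu>_def)
    obtain j1 where j1: "j1 \<in> B" "0 < y j1"
      using T sum_nonpos[of B y] by (force simp: T_def not_le)
    have \<mu>: "\<mu> > 0" using balanced[OF j1(1) j0(1)] j1(2) j0(2) by simp
    have "(\<Sum>j\<in>B. - (y j * log 2 \<mu> + 2 * (y j - \<mu>))) \<le> (\<Sum>j\<in>B. eta (y j))"
    proof (intro sum_mono)
      fix j assume "j \<in> B"
      with balanced[OF this j0(1)] j0(2) xlogx_le_chord[OF \<mu> \<mu>_le[OF \<open>j \<in> B\<close>]]
      show "- (y j * log 2 \<mu> + 2 * (y j - \<mu>)) \<le> eta (y j)" by (simp add: eta_def)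
    qed
    then have lower: "- T * log 2 \<mu> - 2 * T + 2 * k * \<mu> \<le> (\<Sum>j\<in>B. eta (y j))"
      by (simp add: sum.distrib sum_subtractf sum_negf sum_distrib_right[symmetric] T_def k_def
          algebra_simps)
    define s where "s = T / (k * \<mu>)"
    have s: "s > 0" using T k \<mu> by (simp add: s_def)
    have "T * (2 - 2 / s - log 2 s) \<le> T * entropy_gap"
      using two_minus_log_le_entropy_gap[OF s] T by (intro mult_left_mono) auto
    moreover have "T * 2 / s = 2 * k * \<mu>" using s k \<mu> T by (simp add: s_def field_simps)
    moreover have "T / k = \<mu> * s" using k \<mu> by (simp add: s_def field_simps)
    then have "log 2 (T / k) = log 2 \<mu> + log 2 s" using \<mu> s by (simp add: log_mult)
    moreover have "k * eta (T / k) = - T * log 2 (T / k)"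
      using k by (simp add: eta_def)
    ultimately show ?thesis
      using lower unfolding T_def[symmetric] k_def[symmetric] by (simp add: algebra_simps)
  qed
qed

definition lumped_entropy :: "('a \<Rightarrow> real) \<Rightarrow> 'a set \<Rightarrow> real" where
  "lumped_entropy p S = eta (1 - sum p S) + (\<Sum>x\<in>S. eta (p x))"

lemma lumped_entropy_exchange:
  fixes p :: "'a \<Rightarrow> real"
  assumes fin: "finite S" "finite S'" and card: "card S = card S'"
    and Z: "0 < 1 - sum p S" "\<And>x. x \<in> S \<Longrightarrow> p x \<le> 1 - sum p S"
    and nonneg: "\<And>x. x \<in> S' \<Longrightarrow> 0 \<le> p x"
    and exch: "\<And>x y. x \<in> S - S' \<Longrightarrow> y \<in> S' - S \<Longrightarrow> p y \<le> p x"
  shows "lumped_entropy p S' \<le> lumped_entropy p S"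
proof -
  have "card (S - S') = card (S' - S)"
    using fin card card_Diff_subset_Int[of S S'] card_Diff_subset_Int[of S' S]
    by (simp add: Int_commute)
  then obtain \<pi> where \<pi>: "bij_betw \<pi> (S - S') (S' - S)"
    using finite_same_card_bij[OF finite_Diff finite_Diff] fin by blast
  have \<pi>_in: "\<pi> x \<in> S' - S" if "x \<in> S - S'" for x
    using bij_betwE[OF \<pi>] that by blast
  have reindex: "(\<Sum>x\<in>S - S'. g (\<pi> x)) = (\<Sum>y\<in>S' - S. g y)" for g :: "'a \<Rightarrow> real"
    using sum.reindex_bij_betw[OF \<pi>] .
  have split: "sum g S = sum g (S \<inter> S') + sum g (S - S')"
    "sum g S' = sum g (S \<inter> S') + sum g (S' - S)" for g :: "'a \<Rightarrow> real"
    using sum.Int_Diff[OF fin(1), of g S'] sum.Int_Diff[OF fin(2), of g S]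
    by (simp_all only: Int_commute)
  have moves: "0 \<le> p (\<pi> x) \<and> p (\<pi> x) \<le> p x \<and> p x \<le> 1 - sum p S" if "x \<in> S - S'" for x
    using that \<pi>_in[OF that] nonneg exch Z(2) by blast
  have "eta (1 - sum p S + (\<Sum>x\<in>S - S'. p x - p (\<pi> x))) + (\<Sum>x\<in>S - S'. eta (p (\<pi> x)))
      \<le> eta (1 - sum p S) + (\<Sum>x\<in>S - S'. eta (p x))"
    using eta_transfer_to_largest[of "S - S'" _ "\<lambda>x. p (\<pi> x)" p, OF _ Z(1) moves] fin by simp
  moreover have "1 - sum p S + (\<Sum>x\<in>S - S'. p x - p (\<pi> x)) = 1 - sum p S'"
    using split[of p] by (simp add: sum_subtractf reindex)
  ultimately show ?thesis
    unfolding lumped_entropy_def using split[of "\<lambda>x. eta (p x)"] reindex[of "\<lambda>y. eta (p y)"]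
    by simp
qed

definition load :: "'a set \<Rightarrow> ('a \<Rightarrow> real) \<Rightarrow> ('a \<Rightarrow> 'b) \<Rightarrow> 'b \<Rightarrow> real" where
  "load X w g j = (\<Sum>x\<in>{x\<in>X. g x = j}. w x)"

definition sq_load :: "'a set \<Rightarrow> ('a \<Rightarrow> real) \<Rightarrow> 'b set \<Rightarrow> ('a \<Rightarrow> 'b) \<Rightarrow> real" where
  "sq_load X w J g = (\<Sum>j\<in>J. (load X w g j)\<^sup>2)"

definition sq_load_minimal :: "'a set \<Rightarrow> ('a \<Rightarrow> real) \<Rightarrow> 'b set \<Rightarrow> ('a \<Rightarrow> 'b) \<Rightarrow> bool" where
  "sq_load_minimal X w J g \<longleftrightarrow> g \<in> X \<rightarrow>\<^sub>E J \<and> (\<forall>g'\<in>X \<rightarrow>\<^sub>E J. sq_load X w J g \<le> sq_load X w J g')"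

lemma load_le_of_sq_load_minimal:
  assumes "finite X" "finite J" and min: "sq_load_minimal X w J g"
    and x: "x \<in> X" "0 < w x" and B: "B \<in> J"
  shows "load X w g (g x) \<le> w x + load X w g B"
proof (cases "B = g x")
  case False
  define A where "A = g x"
  define g' where "g' = g(x := B)"
  have g: "g \<in> X \<rightarrow>\<^sub>E J" using min by (simp add: sq_load_minimal_def)
  then have A: "A \<in> J" using x by (auto simp: A_def)
  have "g' \<in> X \<rightarrow>\<^sub>E J" using g x B by (auto simp: g'_def PiE_iff extensional_def)
  then have le: "sq_load X w J g \<le> sq_load X w J g'" using min by (simp add: sq_load_minimal_def)
  have "{y\<in>X. g' y = A} = {y\<in>X. g y = A} - {x}" "{y\<in>X. g' y = B} = insert x {y\<in>X. g y = B}"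
    "j \<noteq> A \<Longrightarrow> j \<noteq> B \<Longrightarrow> {y\<in>X. g' y = j} = {y\<in>X. g y = j}" for j
    using x False by (auto simp: g'_def A_def)
  then have "load X w g' A = load X w g A - w x" "load X w g' B = load X w g B + w x"
    "j \<noteq> A \<Longrightarrow> j \<noteq> B \<Longrightarrow> load X w g' j = load X w g j" for j
    using assms False by (auto simp: load_def sum_diff1 A_def)
  then have "(load X w g' j)\<^sup>2 = (load X w g j)\<^sup>2
      + (if j = A then (load X w g A - w x)\<^sup>2 - (load X w g A)\<^sup>2 else 0)
      + (if j = B then (load X w g B + w x)\<^sup>2 - (load X w g B)\<^sup>2 else 0)" for j
    using False by (cases "j = A"; cases "j = B") (auto simp: A_def)
  then have "sq_load X w J g' = sq_load X w J g
      + ((load X w g A - w x)\<^sup>2 - (load X w g A)\<^sup>2) + ((load X w g B + w x)\<^sup>2 - (load X w g B)\<^sup>2)"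
    unfolding sq_load_def using A B assms(2) by (simp add: sum.distrib)
  with le have "0 \<le> 2 * w x * (w x - load X w g A + load X w g B)"
    by (simp add: power2_eq_square algebra_simps)
  then show ?thesis using x by (simp add: zero_le_mult_iff A_def)
qed (use x in simp)

lemma sq_load_minimal_balanced:
  assumes "finite X" "finite J" and min: "sq_load_minimal X w J g"
    and nonneg: "\<And>x. x \<in> X \<Longrightarrow> 0 \<le> w x"
    and "A \<in> J" and heavy: "\<And>x. x \<in> X \<Longrightarrow> w x < load X w g A" and "B \<in> J"
  shows "load X w g A \<le> 2 * load X w g B"
proof (cases "load X w g A \<le> 0")
  case True
  moreover have "0 \<le> load X w g B" unfolding load_def using nonneg by (intro sum_nonneg) auto
  ultimately show ?thesis by simp
next
  case False
  define bin where "bin = {x\<in>X. g x = A}"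
  have bin: "finite bin" "bin \<subseteq> X" using assms(1) by (auto simp: bin_def)
  have Y: "load X w g A = sum w bin" by (simp add: load_def bin_def)
  have pos_in_bin: "\<exists>x\<in>bin - D. 0 < w x" if D: "sum w D < load X w g A" "D \<subseteq> bin" for D
  proof (rule ccontr)
    assume "\<not> ?thesis"
    then have "sum w (bin - D) \<le> 0" by (intro sum_nonpos) (auto simp: not_less)
    moreover have "sum w (bin - D) = sum w bin - sum w D" using bin(1) D(2) by (rule sum_diff)
    ultimately show False using D(1) Y by simp
  qed
  obtain x1 where x1: "x1 \<in> bin" "0 < w x1" using pos_in_bin[of "{}"] False by auto
  then have "w x1 < load X w g A" using bin(2) heavy by blast
  then obtain x2 where x2: "x2 \<in> bin" "x2 \<noteq> x1" "0 < w x2"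
    using pos_in_bin[of "{x1}"] x1 by auto
  define x where "x = (if w x1 \<le> w x2 then x1 else x2)"
  have "w x1 + w x2 = sum w {x1, x2}" using x2 by simp
  also have "\<dots> \<le> sum w bin" using x1 x2 bin nonneg by (intro sum_mono2) auto
  finally have "2 * w x \<le> load X w g A" by (simp add: x_def Y)
  moreover have "x \<in> X" "g x = A" "0 < w x" using x1 x2 by (auto simp: x_def bin_def)
  then have "load X w g A \<le> w x + load X w g B"
    using load_le_of_sq_load_minimal[OF assms(1,2) min, of x B] assms(7) by simp
  ultimately show ?thesis by simp
qed

lemma obtain_sq_load_minimal:
  assumes "finite X" "finite J" "J \<noteq> {}"
  obtains g where "sq_load_minimal X w J g"
proof -
  obtain j where "j \<in> J" using assms(3) by blast
  then have "(\<lambda>x. if x \<in> X then j else undefined) \<in> X \<rightarrow>\<^sub>E J" by auto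
  then have "X \<rightarrow>\<^sub>E J \<noteq> {}" by blast
  then show thesis
    using that ex_is_arg_min_if_finite[of "X \<rightarrow>\<^sub>E J" "sq_load X w J"] assms
    by (auto simp: finite_PiE is_arg_min_linorder sq_load_minimal_def)
qed

lemma sum_img_dist:
  assumes "f \<in> {1..n} \<rightarrow>\<^sub>E {1..m}"
  shows "(\<Sum>j\<in>{1..m}. img_dist n p f j) = (\<Sum>i=1..n. p i)"
  unfolding img_dist_def using assms by (intro sum.group) auto

lemma finite_surj_funs: "finite (surj_funs n m)"
  by (rule finite_subset[of _ "{1..n} \<rightarrow>\<^sub>E {1..m}"]) (auto simp: surj_funs_def finite_PiE)

lemma surj_funsI:
  assumes "\<And>i. i \<in> {1..n} \<Longrightarrow> f i \<in> {1..m}" "\<And>i. i \<notin> {1..n} \<Longrightarrow> f i = undefined"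
    and "\<And>j. j \<in> {1..m} \<Longrightarrow> \<exists>i\<in>{1..n}. f i = j"
  shows "f \<in> surj_funs n m"
  using assms unfolding surj_funs_def by (auto simp: PiE_iff extensional_def) (metis image_eqI)

lemma surj_funs_fiber_nonempty:
  assumes "f \<in> surj_funs n m" "j \<in> {1..m}"
  shows "{i\<in>{1..n}. f i = j} \<noteq> {}"
proof -
  have "j \<in> f ` {1..n}" using assms by (simp add: surj_funs_def)
  then show ?thesis by auto
qed

lemma obtain_max_pos:
  fixes b :: "'a \<Rightarrow> real"
  assumes "finite I" "sum b I = 1"
  obtains J where "J \<in> I" "0 < b J" "\<And>j. j \<in> I \<Longrightarrow> b j \<le> b J"
proof -
  have "I \<noteq> {}" using assms by auto
  then have "Max (b ` I) \<in> b ` I" using assms by (intro Max_in) auto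
  then obtain J where J: "J \<in> I" "b J = Max (b ` I)" by auto
  then have J_max: "b j \<le> b J" if "j \<in> I" for j using that assms by simp
  have "1 \<le> real (card I) * b J" using assms sum_mono[of I b "\<lambda>_. b J"] J_max by simp
  then have "0 < b J" by (smt (verit) mult_nonneg_nonpos of_nat_0_le_iff)
  with J J_max show thesis by (intro that)
qed

locale sorted_distribution =
  fixes n m :: nat and p :: "nat \<Rightarrow> real"
  assumes m_ge_2: "2 \<le> m" and m_less_n: "m < n"
    and p_nonneg: "\<And>i. i \<in> {1..n} \<Longrightarrow> 0 \<le> p i"
    and p_antimono: "\<And>i j. 1 \<le> i \<Longrightarrow> i \<le> j \<Longrightarrow> j \<le> n \<Longrightarrow> p j \<le> p i"
    and sum_p: "(\<Sum>i=1..n. p i) = 1"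
begin

lemma img_dist_nonneg: "0 \<le> img_dist n p f j"
  unfolding img_dist_def by (intro sum_nonneg p_nonneg) auto

lemma lumped_entropy_le_entropy_img:
  assumes f: "f \<in> surj_funs n m"
  obtains S where "S \<subseteq> {1..n}" "card S = m - 1" "0 < 1 - sum p S"
    "\<And>x. x \<in> S \<Longrightarrow> p x \<le> 1 - sum p S"
    "lumped_entropy p S \<le> entropy {1..m} (img_dist n p f)"
proof -
  define b where "b = img_dist n p f"
  have "(\<Sum>j\<in>{1..m}. b j) = 1"
    using f sum_img_dist sum_p by (simp add: b_def surj_funs_def)
  then obtain J where J: "J \<in> {1..m}" "0 < b J" "\<And>j. j \<in> {1..m} \<Longrightarrow> b j \<le> b J"
    using obtain_max_pos[OF finite_atLeastAtMost] by blast
  define e where "e j = Min {i\<in>{1..n}. f i = j}" for j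
  have e: "e j \<in> {1..n}" "f (e j) = j" if "j \<in> {1..m}" for j
    using Min_in[of "{i\<in>{1..n}. f i = j}"] surj_funs_fiber_nonempty[OF f that] by (auto simp: e_def)
  have pe: "0 \<le> p (e j) \<and> p (e j) \<le> b j" if "j \<in> {1..m}" for j
    using e[OF that] p_nonneg unfolding b_def img_dist_def
    by (auto intro: member_le_sum[of _ _ p] p_nonneg)
  define K where "K = {1..m} - {J}"
  define S where "S = e ` K"
  have inj: "inj_on e K" by (rule inj_onI) (metis DiffD1 K_def e(2))
  have sum_S: "(\<Sum>x\<in>S. g x) = (\<Sum>j\<in>K. g (e j))" for g :: "nat \<Rightarrow> real"
    unfolding S_def using sum.reindex[OF inj] by simp
  have split: "(\<Sum>j\<in>{1..m}. g j) = g J + (\<Sum>j\<in>K. g j)" for g :: "nat \<Rightarrow> real"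
    using J by (simp add: K_def sum.remove)
  have Z: "b J + (\<Sum>j\<in>K. b j - p (e j)) = 1 - sum p S"
    using split[of b] \<open>(\<Sum>j\<in>{1..m}. b j) = 1\<close> by (simp add: sum_S sum_subtractf)
  have K: "0 \<le> p (e j) \<and> p (e j) \<le> b j \<and> b j \<le> b J" if "j \<in> K" for j
    using that pe J by (auto simp: K_def)
  have "0 \<le> (\<Sum>j\<in>K. b j - p (e j))" using K by (intro sum_nonneg) auto
  then have bJ_le: "b J \<le> 1 - sum p S" using Z by simp
  show thesis
  proof
    show "S \<subseteq> {1..n}" using e by (auto simp: S_def K_def)
    show "card S = m - 1" using card_image[OF inj] J by (simp add: S_def K_def)
    show "0 < 1 - sum p S" using J bJ_le by simp
    show "p x \<le> 1 - sum p S" if "x \<in> S" for x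
      using that K bJ_le unfolding S_def by fastforce
    have "lumped_entropy p S = eta (b J + (\<Sum>j\<in>K. b j - p (e j))) + (\<Sum>j\<in>K. eta (p (e j)))"
      unfolding lumped_entropy_def Z sum_S[of "\<lambda>x. eta (p x)"] ..
    also have "\<dots> \<le> eta (b J) + (\<Sum>j\<in>K. eta (b j))"
      using K J by (intro eta_transfer_to_largest) (auto simp: K_def)
    also have "\<dots> = entropy {1..m} (img_dist n p f)"
      using split[of "\<lambda>j. eta (b j)"] by (simp add: entropy_eq_sum_eta b_def)
    finally show "lumped_entropy p S \<le> entropy {1..m} (img_dist n p f)" .
  qed
qed

lemma lumped_entropy_tail_le:
  assumes "S \<subseteq> {1..n}" "card S = m - 1" "0 < 1 - sum p S"
    "\<And>x. x \<in> S \<Longrightarrow> p x \<le> 1 - sum p S"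
  shows "lumped_entropy p {n-m+2..n} \<le> lumped_entropy p S"
proof (rule lumped_entropy_exchange)
  show "finite S" using finite_subset[OF assms(1)] by simp
  show "card S = card {n-m+2..n}" using assms(2) m_ge_2 m_less_n by simp
  show "0 \<le> p x" if "x \<in> {n-m+2..n}" for x using that by (intro p_nonneg) auto
  show "p y \<le> p x" if "x \<in> S - {n-m+2..n}" "y \<in> {n-m+2..n} - S" for x y
    using that assms(1) by (intro p_antimono) auto
qed (use assms(3,4) in simp_all)

lemma entropy_Q_vec: "entropy {1..m} (Q_vec n m p) = lumped_entropy p {n-m+2..n}"
proof -
  have "{1..n} = {1..n-m+1} \<union> {n-m+2..n}" using m_ge_2 m_less_n by auto
  then have "1 - sum p {n-m+2..n} = (\<Sum>k=1..n-m+1. p k)"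
    using sum_p sum.union_disjoint[of "{1..n-m+1}" "{n-m+2..n}" p] by simp
  moreover have "{1..m} = insert 1 {2..m}" using m_ge_2 by auto
  moreover have "(\<Sum>i=2..m. eta (p (n - m + i))) = (\<Sum>x=n-m+2..n. eta (p x))"
    using sum.shift_bounds_cl_nat_ivl[of "\<lambda>x. eta (p x)" 2 "n - m" m] m_less_n
    by (simp add: add.commute)
  ultimately show ?thesis
    by (simp add: entropy_eq_sum_eta lumped_entropy_def Q_vec_def)
qed

lemma entropy_Q_vec_le_entropy_img:
  assumes "f \<in> surj_funs n m"
  shows "entropy {1..m} (Q_vec n m p) \<le> entropy {1..m} (img_dist n p f)"
proof -
  obtain S where "S \<subseteq> {1..n}" "card S = m - 1" "0 < 1 - sum p S"
    "\<And>x. x \<in> S \<Longrightarrow> p x \<le> 1 - sum p S"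
    and le: "lumped_entropy p S \<le> entropy {1..m} (img_dist n p f)"
    using lumped_entropy_le_entropy_img[OF assms] by blast
  then have "lumped_entropy p {n-m+2..n} \<le> lumped_entropy p S"
    by (intro lumped_entropy_tail_le)
  with le show ?thesis unfolding entropy_Q_vec by linarith
qed

lemma istar_mem:
  assumes "1 / real m \<le> p 1"
  shows "istar n m p \<in> {i\<in>{1..m-1}. (\<Sum>j=i+1..n. p j) / real (m - i) \<le> p i}"
proof -
  have "{1..n} = insert 1 {1+1..n}" using m_less_n by auto
  then have "(\<Sum>j=1+1..n. p j) = 1 - p 1" using sum_p by simp
  moreover have "1 \<le> real m * p 1" using assms m_ge_2 by (simp add: field_simps)
  ultimately have "(\<Sum>j=1+1..n. p j) / real (m - 1) \<le> p 1"
    using m_ge_2 by (simp add: pos_divide_le_eq of_nat_diff algebra_simps)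
  then have "1 \<in> {i\<in>{1..m-1}. (\<Sum>j=i+1..n. p j) / real (m - i) \<le> p i}" using m_ge_2 by simp
  then show ?thesis unfolding istar_def by (intro Max_in) auto
qed

lemma istar_maximal:
  assumes "i \<in> {1..m-1}" "(\<Sum>j=i+1..n. p j) / real (m - i) \<le> p i"
  shows "i \<le> istar n m p"
  unfolding istar_def using assms by (intro Max_ge) auto

text \<open>\<open>R_cut\<close> is the index \<open>i*\<close> of the paper (\<open>0\<close> when \<open>p 1 < 1/m\<close>), \<open>R_tail\<close> the common value of
  the last \<open>m - i*\<close> coordinates of \<open>R_m(p)\<close>, and \<open>R_ext\<close> continues \<open>R_m(p)\<close> with that value
  up to index \<open>n\<close>.\<close>

definition R_cut :: nat where
  "R_cut = (if p 1 < 1 / real m then 0 else istar n m p)"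

definition R_tail :: real where
  "R_tail = (\<Sum>j=R_cut+1..n. p j) / real (m - R_cut)"

definition R_ext :: "nat \<Rightarrow> real" where
  "R_ext i = (if i \<le> R_cut then p i else R_tail)"

lemma R_cut_less: "R_cut < m"
  using istar_mem m_ge_2 by (auto simp: R_cut_def not_less)

lemma R_vec_eq_R_ext:
  assumes "1 \<le> i"
  shows "R_vec n m p i = R_ext i"
  using assms sum_p by (simp add: R_vec_def R_ext_def R_cut_def R_tail_def)

lemma R_tail_nonneg: "0 \<le> R_tail"
  unfolding R_tail_def by (intro divide_nonneg_nonneg sum_nonneg p_nonneg) auto

lemma sum_head_R_tail: "(\<Sum>i=1..R_cut. p i) + real (m - R_cut) * R_tail = 1"
proof -
  have "{1..n} = {1..R_cut} \<union> {R_cut+1..n}" using R_cut_less m_less_n by auto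
  then show ?thesis
    using sum_p R_cut_less sum.union_disjoint[of "{1..R_cut}" "{R_cut+1..n}" p]
    by (simp add: R_tail_def)
qed

lemma R_tail_le_head:
  assumes "i \<in> {1..R_cut}"
  shows "R_tail \<le> p i"
proof -
  have cut: "R_cut = istar n m p" and "1 / real m \<le> p 1"
    using assms by (auto simp: R_cut_def split: if_splits)
  then have "R_tail \<le> p R_cut" using istar_mem by (simp add: R_tail_def)
  also have "p R_cut \<le> p i" using assms R_cut_less m_less_n by (intro p_antimono) auto
  finally show ?thesis .
qed

lemma p_after_cut_less_R_tail:
  assumes "R_cut + 1 < m"
  shows "p (R_cut + 1) < R_tail"
proof (cases "p 1 < 1 / real m")
  case True
  then show ?thesis using sum_p by (simp add: R_cut_def R_tail_def)
next
  case False
  define k where "k = istar n m p"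
  have k: "R_cut = k" using False by (simp add: R_cut_def k_def)
  have "k + 1 \<in> {1..m-1}" using assms k by auto
  then have "\<not> (\<Sum>j=k+2..n. p j) / real (m - (k+1)) \<le> p (k+1)"
    using istar_maximal[of "k+1"] k_def by fastforce
  then have "real (m - (k+1)) * p (k+1) < (\<Sum>j=k+2..n. p j)"
    using assms by (simp add: k not_le pos_less_divide_eq mult.commute)
  moreover have "(\<Sum>j=k+1..n. p j) = p (k+1) + (\<Sum>j=k+2..n. p j)"
    using assms R_cut_less m_less_n k by (subst sum.atLeast_Suc_atMost) auto
  moreover have "real (m - k) = real (m - (k+1)) + 1" using assms k by simp
  ultimately show ?thesis
    using assms k by (simp add: R_tail_def pos_less_divide_eq algebra_simps)
qed

lemma entropy_R_vec:
  "entropy {1..m} (R_vec n m p) = (\<Sum>i=1..R_cut. eta (p i)) + real (m - R_cut) * eta R_tail"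
proof -
  have "{1..m} = {1..R_cut} \<union> {R_cut+1..m}" using R_cut_less by auto
  then have "entropy {1..m} (R_vec n m p)
      = (\<Sum>i=1..R_cut. eta (R_ext i)) + (\<Sum>i=R_cut+1..m. eta (R_ext i))"
    by (simp add: entropy_eq_sum_eta sum.union_disjoint R_vec_eq_R_ext)
  also have "\<dots> = (\<Sum>i=1..R_cut. eta (p i)) + real (m - R_cut) * eta R_tail"
    using R_cut_less by (simp add: R_ext_def)
  finally show ?thesis .
qed

lemma R_ext_antimono:
  assumes "1 \<le> x" "x \<le> y" "y \<le> n"
  shows "R_ext y \<le> R_ext x"
  using assms R_tail_le_head[of x] p_antimono[of x y] by (auto simp: R_ext_def)

lemma R_ext_nonneg: "x \<in> {1..n} \<Longrightarrow> 0 \<le> R_ext x"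
  using p_nonneg R_tail_nonneg by (simp add: R_ext_def)

lemma R_ext_pos:
  assumes "x \<in> {1..n}" "0 < p x"
  shows "0 < R_ext x"
proof (cases "x \<le> R_cut")
  case False
  then have "p x \<le> (\<Sum>j=R_cut+1..n. p j)"
    using assms by (intro member_le_sum p_nonneg) auto
  then show ?thesis using False assms R_cut_less by (simp add: R_ext_def R_tail_def)
qed (use assms in \<open>simp add: R_ext_def\<close>)

lemma sum_R_ext_le:
  assumes "E \<subseteq> {1..n}" "card E \<le> m"
  shows "(\<Sum>x\<in>E. R_ext x) \<le> 1"
proof -
  define E1 where "E1 = E \<inter> {1..R_cut}"
  define E2 where "E2 = E - {1..R_cut}"
  have fin: "finite E" using finite_subset[OF assms(1)] by simp
  have card_E: "card E = card E1 + card E2"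
    unfolding E1_def E2_def using fin by (metis card_Int_Diff)
  have E1: "E1 \<subseteq> {1..R_cut}" by (auto simp: E1_def)
  have "(\<Sum>x\<in>E1. R_ext x) = (\<Sum>x\<in>E1. p x)"
    by (intro sum.cong) (auto simp: E1_def R_ext_def)
  moreover have "(\<Sum>x\<in>E2. R_ext x) = (\<Sum>x\<in>E2. R_tail)"
    using assms(1) by (intro sum.cong) (auto simp: E2_def R_ext_def)
  ultimately have "(\<Sum>x\<in>E. R_ext x) = (\<Sum>x\<in>E1. p x) + real (card E2) * R_tail"
    using sum.Int_Diff[OF fin, of R_ext "{1..R_cut}"] by (simp add: E1_def E2_def)
  moreover have "(\<Sum>x\<in>E1. p x) + real (card ({1..R_cut} - E1)) * R_tail \<le> (\<Sum>i=1..R_cut. p i)"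
    using sum.subset_diff[OF E1, of p] R_tail_le_head sum_mono[of "{1..R_cut} - E1" "\<lambda>_. R_tail" p]
    by auto
  moreover have "card E1 \<le> R_cut" using card_mono[OF _ E1] by simp
  then have "real (card ({1..R_cut} - E1)) * R_tail = real R_cut * R_tail - real (card E1) * R_tail"
    using E1 by (simp add: card_Diff_subset finite_subset of_nat_diff left_diff_distrib)
  moreover have "real (card E2) * R_tail \<le> (real m - real (card E1)) * R_tail"
    using card_E assms(2) R_tail_nonneg by (intro mult_right_mono) auto
  moreover have "real (m - R_cut) * R_tail = real m * R_tail - real R_cut * R_tail"
    using R_cut_less by (simp add: of_nat_diff left_diff_distrib)
  ultimately show ?thesis using sum_head_R_tail by (simp add: algebra_simps)
qed

lemma cross_entropy_R_ext: "(\<Sum>x=1..n. - p x * log 2 (R_ext x)) = entropy {1..m} (R_vec n m p)"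
proof -
  have "{1..n} = {1..R_cut} \<union> {R_cut+1..n}" using R_cut_less m_less_n by auto
  then have "(\<Sum>x=1..n. - p x * log 2 (R_ext x))
      = (\<Sum>x=1..R_cut. eta (p x)) - (\<Sum>x=R_cut+1..n. p x) * log 2 R_tail"
    by (simp add: sum.union_disjoint R_ext_def eta_def sum_negf sum_distrib_right)
  also have "\<dots> = (\<Sum>x=1..R_cut. eta (p x)) + real (m - R_cut) * eta R_tail"
    using R_cut_less by (simp add: R_tail_def eta_def)
  finally show ?thesis using entropy_R_vec by linarith
qed

lemma entropy_img_le_entropy_R_vec:
  assumes f: "f \<in> surj_funs n m"
  shows "entropy {1..m} (img_dist n p f) \<le> entropy {1..m} (R_vec n m p)"
proof -
  have fE: "f \<in> {1..n} \<rightarrow>\<^sub>E {1..m}" using f by (simp add: surj_funs_def)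
  define bin where "bin j = {i\<in>{1..n}. f i = j}" for j
  define e where "e j = Min (bin j)" for j
  have e_in: "e j \<in> bin j" if "j \<in> {1..m}" for j
    unfolding e_def bin_def using surj_funs_fiber_nonempty[OF f that] by (intro Min_in) auto
  have e_le: "e j \<le> x" if "x \<in> bin j" for j x
    unfolding e_def using that by (intro Min_le) (auto simp: bin_def)
  define \<rho> where "\<rho> j = R_ext (e j)" for j
  have \<rho>_ge: "R_ext x \<le> \<rho> j" if "j \<in> {1..m}" "x \<in> bin j" for j x
    using that e_in[OF that(1)] e_le[OF that(2)] by (auto simp: \<rho>_def bin_def intro!: R_ext_antimono)
  have inj: "inj_on e {1..m}"
    by (rule inj_onI) (metis (mono_tags, lifting) bin_def e_in mem_Collect_eq)
  have "(\<Sum>j\<in>{1..m}. \<rho> j) = (\<Sum>x\<in>e ` {1..m}. R_ext x)"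
    unfolding \<rho>_def using sum.reindex[OF inj, of R_ext] by simp
  also have "\<dots> \<le> 1"
    using e_in card_image_le[of "{1..m}" e] by (intro sum_R_ext_le) (auto simp: bin_def)
  finally have \<rho>_sum: "(\<Sum>j\<in>{1..m}. \<rho> j) \<le> 1" .
  have b: "img_dist n p f j = (\<Sum>x\<in>bin j. p x)" for j by (simp add: img_dist_def bin_def)
  have \<rho>_pos: "0 < \<rho> j" if j: "j \<in> {1..m}" and pos: "0 < img_dist n p f j" for j
  proof -
    obtain x where "x \<in> bin j" "0 < p x"
      using pos sum_nonpos[of "bin j" p] by (force simp: b not_le)
    then show ?thesis using R_ext_pos[of x] \<rho>_ge[OF j] by (force simp: bin_def)
  qed
  have "entropy {1..m} (img_dist n p f) \<le> (\<Sum>j\<in>{1..m}. - img_dist n p f j * log 2 (\<rho> j))"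
    unfolding entropy_eq_sum_eta
    using sum_img_dist[OF fE] sum_p img_dist_nonneg \<rho>_sum \<rho>_pos e_in R_ext_nonneg
    by (intro gibbs_inequality) (auto simp: \<rho>_def bin_def)
  also have "\<dots> = (\<Sum>j\<in>{1..m}. \<Sum>x\<in>bin j. - p x * log 2 (\<rho> j))"
    by (simp add: b sum_distrib_right sum_negf)
  also have "\<dots> \<le> (\<Sum>j\<in>{1..m}. \<Sum>x\<in>bin j. - p x * log 2 (R_ext x))"
    using \<rho>_ge R_ext_pos p_nonneg
    by (intro sum_mono neg_mult_log_antimono) (auto simp: bin_def)
  also have "\<dots> = (\<Sum>x=1..n. - p x * log 2 (R_ext x))"
    unfolding bin_def using fE by (intro sum.group) auto
  also have "\<dots> = entropy {1..m} (R_vec n m p)" by (rule cross_entropy_R_ext)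
  finally show ?thesis .
qed

lemma sum_load_tail:
  assumes "g \<in> {R_cut+1..n} \<rightarrow>\<^sub>E {R_cut+1..m}"
  shows "(\<Sum>j=R_cut+1..m. load {R_cut+1..n} p g j) = real (m - R_cut) * R_tail"
proof -
  have "(\<Sum>j=R_cut+1..m. load {R_cut+1..n} p g j) = (\<Sum>i=R_cut+1..n. p i)"
    unfolding load_def using assms by (intro sum.group) auto
  then show ?thesis using R_cut_less by (simp add: R_tail_def)
qed

lemma sq_load_minimal_tail_balanced:
  assumes min: "sq_load_minimal {R_cut+1..n} p {R_cut+1..m} g"
    and j: "j \<in> {R_cut+1..m}" and j': "j' \<in> {R_cut+1..m}"
  shows "load {R_cut+1..n} p g j \<le> 2 * load {R_cut+1..n} p g j'"
proof (cases "R_cut + 1 < m")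
  case True
  define Y where "Y = load {R_cut+1..n} p g"
  have g: "g \<in> {R_cut+1..n} \<rightarrow>\<^sub>E {R_cut+1..m}" using min by (simp add: sq_load_minimal_def)
  have "Max (Y ` {R_cut+1..m}) \<in> Y ` {R_cut+1..m}" using R_cut_less by (intro Max_in) auto
  then obtain A where A: "A \<in> {R_cut+1..m}" "Y A = Max (Y ` {R_cut+1..m})" by auto
  then have A_max: "Y i \<le> Y A" if "i \<in> {R_cut+1..m}" for i using that by simp
  have "real (m - R_cut) * R_tail \<le> real (m - R_cut) * Y A"
    unfolding sum_load_tail[OF g, symmetric] Y_def[symmetric]
    using sum_mono[of "{R_cut+1..m}" Y "\<lambda>_. Y A"] A_max by simp
  then have "R_tail \<le> Y A" using R_cut_less by simp
  moreover have "p x \<le> p (R_cut + 1)" if "x \<in> {R_cut+1..n}" for x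
    using that by (intro p_antimono) auto
  ultimately have heavy: "p x < Y A" if "x \<in> {R_cut+1..n}" for x
    using that p_after_cut_less_R_tail[OF True] by fastforce
  have "Y A \<le> 2 * Y j'"
    unfolding Y_def using p_nonneg A heavy j'
    by (intro sq_load_minimal_balanced[OF _ _ min]) (auto simp: Y_def)
  then show ?thesis using A_max[OF j] by (simp add: Y_def)
next
  case False
  then have "j = j'" using j j' R_cut_less by simp
  moreover have "0 \<le> load {R_cut+1..n} p g j"
    unfolding load_def by (intro sum_nonneg p_nonneg) auto
  ultimately show ?thesis by simp
qed

lemma balanced_tail_onto:
  assumes g: "g \<in> {R_cut+1..n} \<rightarrow>\<^sub>E {R_cut+1..m}"
    and balanced: "\<And>j j'. j \<in> {R_cut+1..m} \<Longrightarrow> j' \<in> {R_cut+1..m} \<Longrightarrow>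
      load {R_cut+1..n} p g j \<le> 2 * load {R_cut+1..n} p g j'"
    and j: "j \<in> {R_cut+1..m}"
  shows "\<exists>i\<in>{R_cut+1..n}. g i = j"
proof (cases "R_cut + 1 < m")
  case True
  define Y where "Y = load {R_cut+1..n} p g"
  have "0 \<le> p (R_cut + 1)" using R_cut_less m_less_n by (intro p_nonneg) auto
  then have "0 < (\<Sum>i=R_cut+1..m. Y i)"
    using p_after_cut_less_R_tail[OF True] R_cut_less sum_load_tail[OF g] by (simp add: Y_def)
  then obtain j0 where "j0 \<in> {R_cut+1..m}" "0 < Y j0"
    using sum_nonpos[of "{R_cut+1..m}" Y] by (force simp: not_le)
  then have "0 < Y j" using balanced[OF _ j, of j0] by (simp add: Y_def)
  then have "{i\<in>{R_cut+1..n}. g i = j} \<noteq> {}"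
    unfolding Y_def load_def by (metis less_irrefl sum.empty)
  then show ?thesis by blast
next
  case False
  have "R_cut + 1 \<in> {R_cut+1..n}" using R_cut_less m_less_n by simp
  moreover from this have "g (R_cut + 1) \<in> {R_cut+1..m}" using g by blast
  ultimately show ?thesis using j False by force
qed

definition tail_extension :: "(nat \<Rightarrow> nat) \<Rightarrow> nat \<Rightarrow> nat" where
  "tail_extension g i = (if i \<in> {1..n} then if i \<le> R_cut then i else g i else undefined)"

lemma tail_extension_fiber:
  assumes g: "g \<in> {R_cut+1..n} \<rightarrow>\<^sub>E {R_cut+1..m}"
  shows "j \<in> {1..R_cut} \<Longrightarrow> {i\<in>{1..n}. tail_extension g i = j} = {j}"
    and "j \<in> {R_cut+1..m} \<Longrightarrow> {i\<in>{1..n}. tail_extension g i = j} = {i\<in>{R_cut+1..n}. g i = j}"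
proof -
  have g_gt: "R_cut < g i" if "\<not> i \<le> R_cut" "i \<le> n" for i
    using that PiE_mem[OF g, of i] by fastforce
  show "j \<in> {1..R_cut} \<Longrightarrow> {i\<in>{1..n}. tail_extension g i = j} = {j}"
    using R_cut_less m_less_n by (auto simp: tail_extension_def dest: g_gt)
  show "j \<in> {R_cut+1..m} \<Longrightarrow> {i\<in>{1..n}. tail_extension g i = j} = {i\<in>{R_cut+1..n}. g i = j}"
    by (auto simp: tail_extension_def)
qed

lemma tail_extension_in_surj_funs:
  assumes g: "g \<in> {R_cut+1..n} \<rightarrow>\<^sub>E {R_cut+1..m}"
    and onto: "\<And>j. j \<in> {R_cut+1..m} \<Longrightarrow> \<exists>i\<in>{R_cut+1..n}. g i = j"
  shows "tail_extension g \<in> surj_funs n m"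
proof (rule surj_funsI)
  show "tail_extension g i \<in> {1..m}" if "i \<in> {1..n}" for i
    using that R_cut_less PiE_mem[OF g, of i] by (auto simp: tail_extension_def)
  show "\<exists>i\<in>{1..n}. tail_extension g i = j" if j: "j \<in> {1..m}" for j
  proof (cases "j \<le> R_cut")
    case True
    then show ?thesis
      using j R_cut_less m_less_n by (intro bexI[of _ j]) (auto simp: tail_extension_def)
  next
    case False
    then obtain i where "i \<in> {R_cut+1..n}" "g i = j" using onto[of j] j by auto
    then show ?thesis by (intro bexI[of _ i]) (auto simp: tail_extension_def)
  qed
qed (auto simp: tail_extension_def)

lemma entropy_img_tail_extension:
  assumes g: "g \<in> {R_cut+1..n} \<rightarrow>\<^sub>E {R_cut+1..m}"
  shows "entropy {1..m} (img_dist n p (tail_extension g))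
    = (\<Sum>j=1..R_cut. eta (p j)) + (\<Sum>j=R_cut+1..m. eta (load {R_cut+1..n} p g j))"
proof -
  have "{1..m} = {1..R_cut} \<union> {R_cut+1..m}" using R_cut_less by auto
  then show ?thesis
    using tail_extension_fiber[OF g]
    by (simp add: entropy_eq_sum_eta sum.union_disjoint img_dist_def load_def)
qed

lemma exists_surj_fun_entropy_ge:
  "\<exists>f\<in>surj_funs n m. entropy {1..m} (R_vec n m p) - entropy_gap \<le> entropy {1..m} (img_dist n p f)"
proof -
  obtain g where min: "sq_load_minimal {R_cut+1..n} p {R_cut+1..m} g"
    using obtain_sq_load_minimal[of "{R_cut+1..n}" "{R_cut+1..m}"] R_cut_less by auto
  then have g: "g \<in> {R_cut+1..n} \<rightarrow>\<^sub>E {R_cut+1..m}" by (simp add: sq_load_minimal_def)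
  define Y where "Y = load {R_cut+1..n} p g"
  have balanced: "Y j \<le> 2 * Y j'" if "j \<in> {R_cut+1..m}" "j' \<in> {R_cut+1..m}" for j j'
    unfolding Y_def using sq_load_minimal_tail_balanced[OF min that] .
  have "0 \<le> Y j" for j unfolding Y_def load_def by (intro sum_nonneg p_nonneg) auto
  then have "real (card {R_cut+1..m}) * eta ((\<Sum>j=R_cut+1..m. Y j) / real (card {R_cut+1..m}))
      - entropy_gap * (\<Sum>j=R_cut+1..m. Y j) \<le> (\<Sum>j=R_cut+1..m. eta (Y j))"
    using R_cut_less balanced by (intro sum_eta_balanced_ge) auto
  then have tail: "real (m - R_cut) * eta R_tail - entropy_gap * (real (m - R_cut) * R_tail)
      \<le> (\<Sum>j=R_cut+1..m. eta (Y j))"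
    using sum_load_tail[OF g] R_cut_less by (simp add: Y_def)
  have gap: "entropy_gap * (real (m - R_cut) * R_tail) \<le> entropy_gap"
    using sum_head_R_tail entropy_gap_nonneg sum_nonneg[of "{1..R_cut}" p] p_nonneg R_cut_less m_less_n
    by (intro mult_left_le) auto
  have onto: "\<exists>i\<in>{R_cut+1..n}. g i = j" if "j \<in> {R_cut+1..m}" for j
    using balanced_tail_onto[OF g] sq_load_minimal_tail_balanced[OF min] that by blast
  show ?thesis
  proof (rule bexI[OF _ tail_extension_in_surj_funs[OF g onto]])
    show "entropy {1..m} (R_vec n m p) - entropy_gap \<le> entropy {1..m} (img_dist n p (tail_extension g))"
      using tail gap unfolding entropy_R_vec entropy_img_tail_extension[OF g] Y_def by linarith
  qed
qed

lemma exists_surj_fun_entropy_Q_vec: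
  "\<exists>f\<in>surj_funs n m. entropy {1..m} (img_dist n p f) = entropy {1..m} (Q_vec n m p)"
proof -
  define f where "f i = (if i \<in> {1..n} then if i \<le> n - m + 1 then 1 else i - (n - m) else undefined)"
    for i
  have first: "{i\<in>{1..n}. f i = 1} = {1..n-m+1}"
    using m_ge_2 m_less_n by (auto simp: f_def)
  have single: "{i\<in>{1..n}. f i = j} = {n - m + j}" if "j \<in> {2..m}" for j
    using that m_less_n by (auto simp: f_def)
  have "f \<in> surj_funs n m"
  proof (rule surj_funsI)
    show "f i \<in> {1..m}" if "i \<in> {1..n}" for i using that m_ge_2 m_less_n by (auto simp: f_def)
    show "\<exists>i\<in>{1..n}. f i = j" if j: "j \<in> {1..m}" for j
    proof (cases "j = 1")
      case True
      then show ?thesis using first m_less_n by force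
    next
      case False
      then show ?thesis using single[of j] j by force
    qed
  qed (auto simp: f_def)
  moreover have "img_dist n p f j = Q_vec n m p j" if "j \<in> {1..m}" for j
    using that first single[of j] by (auto simp: img_dist_def Q_vec_def)
  then have "entropy {1..m} (img_dist n p f) = entropy {1..m} (Q_vec n m p)"
    by (simp add: entropy_eq_sum_eta)
  ultimately show ?thesis by blast
qed

end

theorem theorem1:
  fixes n m :: nat and p :: "nat \<Rightarrow> real"
  assumes "2 \<le> m" and "m < n"
    and "\<And>i. i \<in> {1..n} \<Longrightarrow> p i \<ge> 0"
    and "\<And>i j. 1 \<le> i \<Longrightarrow> i \<le> j \<Longrightarrow> j \<le> n \<Longrightarrow> p j \<le> p i"
    and "(\<Sum>i=1..n. p i) = 1"
  defines "\<alpha> \<equiv> 1 - (1 + ln (ln 2)) / ln (2::real)"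
  shows "Max ((\<lambda>f. entropy {1..m} (img_dist n p f)) ` surj_funs n m)
           \<in> {entropy {1..m} (R_vec n m p) - \<alpha> .. entropy {1..m} (R_vec n m p)}
     \<and> \<alpha> < 0.08608
     \<and> Min ((\<lambda>f. entropy {1..m} (img_dist n p f)) ` surj_funs n m)
           = entropy {1..m} (Q_vec n m p)"
proof -
  interpret sorted_distribution n m p using assms(1-5) by unfold_locales
  define entropies where "entropies = (\<lambda>f. entropy {1..m} (img_dist n p f)) ` surj_funs n m"
  have \<alpha>: "\<alpha> = entropy_gap" by (simp add: \<alpha>_def entropy_gap_def)
  obtain f0 where f0: "f0 \<in> surj_funs n m"
    "entropy {1..m} (R_vec n m p) - entropy_gap \<le> entropy {1..m} (img_dist n p f0)"
    using exists_surj_fun_entropy_ge by blast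
  have fin: "finite entropies" and ne: "entropies \<noteq> {}"
    using finite_surj_funs f0(1) by (auto simp: entropies_def)
  have "Max entropies \<le> entropy {1..m} (R_vec n m p)"
    unfolding Max_le_iff[OF fin ne] using entropy_img_le_entropy_R_vec by (auto simp: entropies_def)
  moreover have "entropy {1..m} (R_vec n m p) - entropy_gap \<le> Max entropies"
    unfolding Max_ge_iff[OF fin ne] using f0 by (auto simp: entropies_def)
  moreover have "Min entropies = entropy {1..m} (Q_vec n m p)"
  proof (rule Min_eqI[OF fin])
    obtain f where "f \<in> surj_funs n m" "entropy {1..m} (img_dist n p f) = entropy {1..m} (Q_vec n m p)"
      using exists_surj_fun_entropy_Q_vec by blast
    then show "entropy {1..m} (Q_vec n m p) \<in> entropies" unfolding entropies_def by force
  qed (use entropy_Q_vec_le_entropy_img in \<open>auto simp: entropies_def\<close>)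
  ultimately show ?thesis using entropy_gap_less unfolding \<alpha> entropies_def by simp
qed

end
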